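(* Let $w\doteq\delta^n\tau_1^{u_1}\cdots\tau_t^{u_t}$ be a word in Xu normal form. Then the unique word in Garside normal form conjugate to $w$ is as follows (with $k\in\mathbb{Z}$): - $w\doteq\delta^{3k}$: $\Delta^{2k}$; - $w\doteq\delta^{3k+1}$: $\Delta^{2k}ab$; - $w\doteq\delta^{3k+2}$: $\Delta^{2k}a^3b$; - $w\doteq\delta^{3k}a^{u_1}$: $\Delta^{2k}a^{u_1}$; - $w\doteq\delta^{3k+1}a$: $\Delta^{2k}a^2b$; - $w\doteq\delta^{3k+2}a^{u_1}$: $\Delta^{2k+1}a^{1+u_1}$; - $t\geq 2$ (case (c) of the Xu normal form criterion): $\Delta^{(2n-t)/3}\sigma_1^{1+u_1}\sigma_2^{1+u_2}\cdots\sigma_t^{1+u_t}$.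
   Context: $B_3=\langle a,b\mid aba=bab\rangle$, $x=a^{-1}ba$, $\delta=ba$, $\Delta=aba$. For $i\in\mathbb{Z}$: $\tau_i=a,b,x$ according as $i\equiv1,2,0\pmod 3$; $\sigma_i=a$ if $i$ odd, $\sigma_i=b$ if $i$ even. A word $\delta^n\tau_1^{u_1}\cdots\tau_t^{u_t}$ ($n\in\mathbb{Z}$, $t\ge0$, $u_i\ge1$) is in Xu normal form if $(-n,t,u_1,\dots,u_t)$ is lexicographically minimal among all such words representing braids in the same conjugacy class. A word $\Delta^\ell\sigma_1^{p_1}\cdots\sigma_r^{p_r}$ with $\ell\in\mathbb{Z}$, $r\ge0$, $p_i\ge1$ is in Garside normal form if one of: (A) $\ell$ even and $r\in\{0,1\}$; (B) $\ell$ even, $r=2$, $p_1\in\{1,2,3\}$, $p_2=1$; (C)/(D) $r\ge1$, all $p_i\ge2$, $\ell\equiv r\pmod 2$, and $(p_1,\dots,p_r)$ lexicographically minimal among its cyclic permutations. Every conjugacy class of $B_3$ contains a unique word in Garside normal form. *)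

theory Defs
  imports Main "HOL-Library.List_Lexorder" "HOL-Library.Product_Lexorder"
begin

datatype gen = GA | GB

text \<open>A letter is a generator with a sign: True = positive, False = inverse.\<close>
type_synonym bword = "(gen \<times> bool) list"

definition inv_word :: "bword \<Rightarrow> bword" where
  "inv_word w = rev (map (\<lambda>(g, s). (g, \<not> s)) w)"

inductive braid_step :: "bword \<Rightarrow> bword \<Rightarrow> bool" where
  cancel: "braid_step (u @ [(g, s), (g, \<not> s)] @ v) (u @ v)"
| rel: "braid_step (u @ [(GA, True), (GB, True), (GA, True)] @ v)
                   (u @ [(GB, True), (GA, True), (GB, True)] @ v)"

definition braid_eq :: "bword \<Rightarrow> bword \<Rightarrow> bool" where
  "braid_eq = equivclp braid_step"

definition braid_conj :: "bword \<Rightarrow> bword \<Rightarrow> bool" where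
  "braid_conj v w \<longleftrightarrow> (\<exists>g. braid_eq (g @ v @ inv_word g) w)"

definition wa :: bword where "wa = [(GA, True)]"
definition wb :: bword where "wb = [(GB, True)]"
definition wx :: bword where "wx = inv_word wa @ wb @ wa"
definition wdelta :: bword where "wdelta = wb @ wa"
definition wDelta :: bword where "wDelta = wa @ wb @ wa"

definition npow :: "bword \<Rightarrow> nat \<Rightarrow> bword" where
  "npow w k = concat (replicate k w)"

definition zpow :: "bword \<Rightarrow> int \<Rightarrow> bword" where
  "zpow w n = (if 0 \<le> n then npow w (nat n) else npow (inv_word w) (nat (- n)))"

definition tau :: "nat \<Rightarrow> bword" where
  "tau i = (if i mod 3 = 1 then wa else if i mod 3 = 2 then wb else wx)"

definition sigma :: "nat \<Rightarrow> bword" where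
  "sigma i = (if odd i then wa else wb)"

definition xu_word :: "int \<Rightarrow> nat list \<Rightarrow> bword" where
  "xu_word n us = zpow wdelta n @ concat (map (\<lambda>(i, u). npow (tau i) u) (enumerate 1 us))"

definition garside_word :: "int \<Rightarrow> nat list \<Rightarrow> bword" where
  "garside_word l ps = zpow wDelta l @ concat (map (\<lambda>(i, p). npow (sigma i) p) (enumerate 1 ps))"

definition xu_nf :: "int \<Rightarrow> nat list \<Rightarrow> bool" where
  "xu_nf n us \<longleftrightarrow> (\<forall>u\<in>set us. 1 \<le> u) \<and>
     (\<forall>n' us'. (\<forall>u\<in>set us'. 1 \<le> u) \<and> braid_conj (xu_word n us) (xu_word n' us')
        \<longrightarrow> (- n, length us, us) \<le> (- n', length us', us'))"

definition garside_nf :: "int \<Rightarrow> nat list \<Rightarrow> bool" where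
  "garside_nf l ps \<longleftrightarrow> (\<forall>p\<in>set ps. 1 \<le> p) \<and>
     ((even l \<and> length ps \<le> 1)
    \<or> (even l \<and> length ps = 2 \<and> ps ! 0 \<in> {1, 2, 3} \<and> ps ! 1 = 1)
    \<or> (1 \<le> length ps \<and> (\<forall>p\<in>set ps. 2 \<le> p) \<and> l mod 2 = int (length ps) mod 2
        \<and> (\<forall>i<length ps. ps \<le> rotate i ps)))"

definition is_garside_rep :: "bword \<Rightarrow> int \<Rightarrow> nat list \<Rightarrow> bool" where
  "is_garside_rep w l ps \<longleftrightarrow> garside_nf l ps \<and> braid_conj w (garside_word l ps)"

end

theory Submission
  imports Defs
begin

text \<open>Conjugation by \<open>\<delta>\<close> shifts \<open>\<tau>\<^sub>i\<close> to \<open>\<tau>\<^sub>i\<^sub>+\<^sub>1\<close>, conjugation by \<open>\<Delta>\<close> shifts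
  \<open>\<sigma>\<^sub>i\<close> to \<open>\<sigma>\<^sub>i\<^sub>+\<^sub>1\<close>, and \<open>\<delta>\<^sup>3 = \<Delta>\<^sup>2\<close> is central; the short cases are direct
  computations modulo the centre. For \<open>t \<ge> 2\<close>, cyclically moving the first block
  \<open>\<sigma>\<^sub>1\<^sup>u\<^sup>1\<close> of a Xu-minimal word to the end must neither merge it with the last block
  (shorter \<open>t\<close>) nor create a factor \<open>\<sigma>\<^sub>2 \<sigma>\<^sub>1 = \<delta>\<close> (larger \<open>n\<close>), which forces
  \<open>n + t = 0 (mod 3)\<close>. Then every cyclic rotation of \<open>(u\<^sub>1, \<dots>, u\<^sub>t)\<close> yields a conjugate
  word, so minimality gives the rotation condition of the Garside normal form, and both
  \<open>\<delta>\<^sup>n \<tau>\<^sub>1\<^sup>u\<^sup>1 \<cdots> \<tau>\<^sub>t\<^sup>u\<^sup>t\<close> and \<open>\<Delta>\<^sup>l \<sigma>\<^sub>1\<^sup>1\<^sup>+\<^sup>u\<^sup>1 \<cdots> \<sigma>\<^sub>t\<^sup>1\<^sup>+\<^sup>u\<^sup>t\<close> with \<open>3 l = 2 n - t\<close> are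
  conjugate to the same power of \<open>\<delta>\<close> times \<open>\<sigma>\<^sub>1\<^sup>u\<^sup>1 \<delta>\<^sup>-\<^sup>1 \<sigma>\<^sub>1\<^sup>u\<^sup>2 \<cdots> \<delta>\<^sup>-\<^sup>1 \<sigma>\<^sub>1\<^sup>u\<^sup>t\<close>.\<close>

section \<open>Groups with an explicit inverse\<close>

class group_mult = monoid_mult +
  fixes ginv :: "'a \<Rightarrow> 'a"
  assumes ginv_mult_self: "ginv x * x = 1"
begin

sublocale mult: group times 1 ginv
  by standard (simp_all add: ginv_mult_self)

lemma ginv_mult_cancel_left [simp]: "ginv x * (x * y) = y"
  by (simp add: mult.assoc [symmetric])

lemma mult_ginv_cancel_left [simp]: "x * (ginv x * y) = y"
  by (simp add: mult.assoc [symmetric])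

lemma ginv_power: "ginv (x ^ n) = ginv x ^ n"
  by (induction n) (simp_all add: mult.inverse_distrib_swap power_commutes)

lemma power_conjugate: "(ginv h * x * h) ^ n = ginv h * x ^ n * h"
  by (induction n) (simp_all add: mult.assoc)

definition conjugate :: "'a \<Rightarrow> 'a \<Rightarrow> bool" where
  "conjugate x y \<longleftrightarrow> (\<exists>h. h * x * ginv h = y)"

lemma conjugateI: "h * x * ginv h = y \<Longrightarrow> conjugate x y"
  unfolding conjugate_def by blast

lemma conjugate_refl: "conjugate x x"
  by (rule conjugateI[of 1]) simp

lemma conjugate_sym: "conjugate x y \<Longrightarrow> conjugate y x"
  unfolding conjugate_def by (metis ginv_mult_cancel_left mult.assoc mult.inverse_inverse)

lemma conjugate_trans: "conjugate x y \<Longrightarrow> conjugate y z \<Longrightarrow> conjugate x z"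
  unfolding conjugate_def by (metis mult.inverse_distrib_swap mult.assoc)

lemma conjugate_mult_swap: "conjugate (x * y) (y * x)"
  by (rule conjugateI[of y]) (simp add: mult.assoc)

definition central :: "'a \<Rightarrow> bool" where
  "central z \<longleftrightarrow> (\<forall>y. z * y = y * z)"

lemma commute_ginv:
  assumes "z * x = x * z"
  shows "z * ginv x = ginv x * z"
proof -
  have "z * ginv x = ginv x * (x * z) * ginv x" by simp
  also have "\<dots> = ginv x * (z * x) * ginv x" by (simp only: assms)
  also have "\<dots> = ginv x * z" by (simp add: mult.assoc)
  finally show ?thesis .
qed

lemma central_ginv: "central z \<Longrightarrow> central (ginv z)"
  unfolding central_def by (metis commute_ginv)

lemma central_power:
  assumes "central z"
  shows "central (z ^ n)"
proof (induction n)
  case (Suc n)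
  then show ?case
    using assms unfolding central_def by (metis power_Suc mult.assoc)
qed (simp add: central_def)

lemma conjugate_central_mult:
  assumes "central z" and "conjugate x y"
  shows "conjugate (z * x) (z * y)"
proof -
  from assms(2) obtain h where h: "h * x * ginv h = y"
    unfolding conjugate_def by blast
  have "h * (z * x) * ginv h = z * (h * x * ginv h)"
    using assms(1) unfolding central_def by (metis mult.assoc)
  with h show ?thesis by (blast intro: conjugateI)
qed

definition ipow :: "'a \<Rightarrow> int \<Rightarrow> 'a" where
  "ipow x n = (if 0 \<le> n then x ^ nat n else ginv x ^ nat (- n))"

lemma ipow_of_nat [simp]: "ipow x (int k) = x ^ k"
  by (simp add: ipow_def)

lemma ipow_0 [simp]: "ipow x 0 = 1" and ipow_1 [simp]: "ipow x 1 = x"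
  by (simp_all add: ipow_def)

lemma ipow_succ: "ipow x (n + 1) = ipow x n * x"
proof (cases "0 \<le> n")
  case True
  then have "nat (n + 1) = Suc (nat n)" by simp
  with True show ?thesis by (simp add: ipow_def power_commutes)
next
  case False
  define m where "m = nat (- (n + 1))"
  with False have m: "nat (- n) = Suc m" by simp
  have "ginv x ^ Suc m * x = ginv x ^ m"
    by (simp only: power_Suc2 mult.assoc ginv_mult_self mult_1_right)
  with False m m_def show ?thesis by (simp add: ipow_def)
qed

lemma ipow_pred: "ipow x (n - 1) = ipow x n * ginv x"
  using ipow_succ[of x "n - 1"] by (simp add: mult.assoc)

lemma ipow_add: "ipow x (m + n) = ipow x m * ipow x n"
proof (induction n rule: int_induct[where k = 0])
  case (step1 i)
  then show ?case by (simp add: ipow_succ mult.assoc flip: add.assoc)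
next
  case (step2 i)
  have "m + (i - 1) = (m + i) - 1" by simp
  with step2 show ?case by (simp only: ipow_pred mult.assoc)
qed simp

lemma ipow_commute: "ipow x m * ipow x n = ipow x n * ipow x m"
  by (metis add.commute ipow_add)

lemma ipow_mult: "ipow x (int c * k) = ipow (x ^ c) k"
proof (induction k rule: int_induct[where k = 0])
  case (step1 i)
  have "int c * (i + 1) = int c * i + int c" by (simp add: algebra_simps)
  with step1 show ?case by (simp add: ipow_add ipow_succ)
next
  case (step2 i)
  have "ipow x (int c * (i - 1)) = ipow x (int c * i) * ipow x (- int c)"
    using ipow_add[of x "int c * i" "- int c"] by (simp add: algebra_simps)
  moreover have "ipow x (- int c) = ginv (x ^ c)" by (simp add: ipow_def ginv_power)
  ultimately show ?case by (simp add: step2 ipow_pred)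
qed simp

lemma ipow_div_mod:
  assumes "0 < c"
  shows "ipow x n = ipow (x ^ c) (n div int c) * x ^ nat (n mod int c)"
proof -
  have "n = int c * (n div int c) + int (nat (n mod int c))"
    using assms by simp
  then show ?thesis
    by (metis ipow_add ipow_mult ipow_of_nat)
qed

lemma central_ipow: "central z \<Longrightarrow> central (ipow z n)"
  by (simp add: ipow_def central_power central_ginv)

end

section \<open>The braid group as a quotient of words\<close>

lemma braid_step_append_context: "braid_step u v \<Longrightarrow> braid_step (p @ u @ q) (p @ v @ q)"
proof (induction rule: braid_step.induct)
  case (cancel u g s v)
  show ?case using braid_step.cancel[of "p @ u" g s "v @ q"] by simp
next
  case (rel u v)
  show ?case using braid_step.rel[of "p @ u" "v @ q"] by simp
qed

lemma braid_eq_append_context: "braid_eq u v \<Longrightarrow> braid_eq (p @ u @ q) (p @ v @ q)"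
  unfolding braid_eq_def
proof (induction rule: equivclp_induct)
  case (step y z)
  then have "equivclp braid_step (p @ y @ q) (p @ z @ q)"
    by (meson braid_step_append_context equivclp_into_equivclp equivclp_refl)
  with step.IH show ?case by (meson equivclp_trans)
qed simp

lemma equivp_braid_eq: "equivp braid_eq"
  unfolding braid_eq_def by simp

lemma braid_eq_append: "braid_eq u u' \<Longrightarrow> braid_eq v v' \<Longrightarrow> braid_eq (u @ v) (u' @ v')"
  using braid_eq_append_context[of u u' "[]" v] braid_eq_append_context[of v v' u' "[]"]
    equivp_braid_eq by (simp add: equivp_def)

quotient_type braid = bword / braid_eq
  by (rule equivp_braid_eq)

instantiation braid :: monoid_mult
begin
lift_definition one_braid :: braid is "[]" .
lift_definition times_braid :: "braid \<Rightarrow> braid \<Rightarrow> braid" is "(@)"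
  by (rule braid_eq_append)
instance by standard (transfer, simp add: equivp_reflp[OF equivp_braid_eq])+
end

abbreviation br :: "bword \<Rightarrow> braid" where "br \<equiv> abs_braid"

lemma br_append: "br (u @ v) = br u * br v"
  by (simp add: times_braid.abs_eq)

lemma br_Nil: "br [] = 1"
  by (simp add: one_braid.abs_eq)

lemma br_surj: "\<exists>w. x = br w"
  by (metis Quotient3_abs_rep Quotient3_braid)

lemma br_eq_iff: "br u = br v \<longleftrightarrow> braid_eq u v"
  by (simp add: braid.abs_eq_iff)

lemma br_step: "braid_step u v \<Longrightarrow> br u = br v"
  by (simp add: br_eq_iff braid_eq_def r_into_equivclp)

lemma br_cancel: "br [(g, s), (g, \<not> s)] = 1"
  using br_step[OF braid_step.cancel[of "[]" g s "[]"]] by (simp add: br_Nil)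

lemma br_inv_word_mult: "br (inv_word w) * br w = 1"
proof (induction w)
  case Nil
  then show ?case by (simp add: inv_word_def br_Nil)
next
  case (Cons x w)
  obtain g s where x: "x = (g, s)" by fastforce
  have "inv_word (x # w) @ x # w = inv_word w @ [(g, \<not> s), (g, s)] @ w"
    by (simp add: inv_word_def x)
  then have "br (inv_word (x # w)) * br (x # w) = br (inv_word w) * (br [(g, \<not> s), (g, s)] * br w)"
    by (metis br_append mult.assoc)
  with Cons show ?case using br_cancel[of g "\<not> s"] by simp
qed

instantiation braid :: group_mult
begin
definition ginv_braid :: "braid \<Rightarrow> braid" where
  "ginv_braid x = br (inv_word (rep_braid x))"
instance
proof
  fix x :: braid
  show "ginv x * x = 1"
    using br_inv_word_mult[of "rep_braid x"]
    by (metis ginv_braid_def Quotient3_abs_rep Quotient3_braid)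
qed
end

lemma br_inv_word: "br (inv_word w) = ginv (br w)"
  using br_inv_word_mult[of w] by (metis mult.right_cancel ginv_mult_self)

lemma braid_conj_iff: "braid_conj v w \<longleftrightarrow> conjugate (br v) (br w)"
  unfolding braid_conj_def conjugate_def br_eq_iff[symmetric] br_append br_inv_word
  by (metis br_surj mult.assoc)

lemma br_npow: "br (npow w k) = br w ^ k"
  by (induction k) (simp_all add: npow_def br_Nil br_append)

lemma br_zpow: "br (zpow w n) = ipow (br w) n"
  by (simp add: zpow_def ipow_def br_npow br_inv_word)

definition \<sigma>\<^sub>1 :: braid where "\<sigma>\<^sub>1 = br wa"
definition \<sigma>\<^sub>2 :: braid where "\<sigma>\<^sub>2 = br wb"
definition \<delta> :: braid where "\<delta> = \<sigma>\<^sub>2 * \<sigma>\<^sub>1"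
definition \<Delta> :: braid where "\<Delta> = \<sigma>\<^sub>1 * \<sigma>\<^sub>2 * \<sigma>\<^sub>1"

lemma braid_relation: "\<sigma>\<^sub>1 * \<sigma>\<^sub>2 * \<sigma>\<^sub>1 = \<sigma>\<^sub>2 * \<sigma>\<^sub>1 * \<sigma>\<^sub>2"
  using br_step[OF braid_step.rel[of "[]" "[]"]]
  by (simp add: \<sigma>\<^sub>1_def \<sigma>\<^sub>2_def wa_def wb_def flip: br_append)

lemma braid_relation_assoc: "\<sigma>\<^sub>1 * (\<sigma>\<^sub>2 * \<sigma>\<^sub>1) = \<sigma>\<^sub>2 * (\<sigma>\<^sub>1 * \<sigma>\<^sub>2)"
  by (metis braid_relation mult.assoc)

lemma braid_relation_mult: "\<sigma>\<^sub>1 * (\<sigma>\<^sub>2 * (\<sigma>\<^sub>1 * z)) = \<sigma>\<^sub>2 * (\<sigma>\<^sub>1 * (\<sigma>\<^sub>2 * z))"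
  by (metis braid_relation mult.assoc)

lemma br_wx: "br wx = ginv \<sigma>\<^sub>1 * \<sigma>\<^sub>2 * \<sigma>\<^sub>1"
  by (simp add: wx_def br_append br_inv_word \<sigma>\<^sub>1_def \<sigma>\<^sub>2_def mult.assoc)

lemma br_wdelta: "br wdelta = \<delta>"
  by (simp add: wdelta_def br_append \<delta>_def \<sigma>\<^sub>1_def \<sigma>\<^sub>2_def)

lemma br_wDelta: "br wDelta = \<Delta>"
  by (simp add: wDelta_def br_append \<Delta>_def \<sigma>\<^sub>1_def \<sigma>\<^sub>2_def mult.assoc)

lemma Delta_eq: "\<Delta> = \<sigma>\<^sub>1 * \<delta>"
  by (simp add: \<Delta>_def \<delta>_def mult.assoc)

lemma Delta_sigma1: "\<Delta> * \<sigma>\<^sub>1 = \<sigma>\<^sub>2 * \<Delta>"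
  by (simp add: \<Delta>_def mult.assoc braid_relation_mult)

lemma Delta_sigma2: "\<Delta> * \<sigma>\<^sub>2 = \<sigma>\<^sub>1 * \<Delta>"
  by (simp add: \<Delta>_def) (metis braid_relation mult.assoc)

lemma Delta_sigma1_mult: "\<Delta> * (\<sigma>\<^sub>1 * z) = \<sigma>\<^sub>2 * (\<Delta> * z)"
  by (simp add: Delta_sigma1 flip: mult.assoc)

lemma Delta_sigma2_mult: "\<Delta> * (\<sigma>\<^sub>2 * z) = \<sigma>\<^sub>1 * (\<Delta> * z)"
  by (simp add: Delta_sigma2 flip: mult.assoc)

lemma Delta_sigma1_eq_delta_sq: "\<Delta> * \<sigma>\<^sub>1 = \<delta> * \<delta>"
  by (simp add: Delta_sigma1 \<Delta>_def \<delta>_def mult.assoc braid_relation_mult)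

lemma central_if_commutes_generators:
  assumes "z * \<sigma>\<^sub>1 = \<sigma>\<^sub>1 * z" and "z * \<sigma>\<^sub>2 = \<sigma>\<^sub>2 * z"
  shows "central z"
  unfolding central_def
proof
  fix y :: braid
  obtain v where y: "y = br v" using br_surj by blast
  have "z * br w = br w * z" for w
  proof (induction w)
    case Nil
    then show ?case by (simp add: br_Nil)
  next
    case (Cons x w)
    obtain g s where x: "x = (g, s)" by fastforce
    have "br [x] \<in> {\<sigma>\<^sub>1, \<sigma>\<^sub>2, ginv \<sigma>\<^sub>1, ginv \<sigma>\<^sub>2}"
      by (cases g; cases s) (simp_all add: x \<sigma>\<^sub>1_def \<sigma>\<^sub>2_def wa_def wb_def inv_word_def flip: br_inv_word)
    then have "z * br [x] = br [x] * z"
      using assms commute_ginv by auto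
    with Cons show ?case
      by (metis br_append append_Cons append_Nil mult.assoc)
  qed
  then show "z * y = y * z"
    by (simp add: y)
qed

lemma central_Delta_sq: "central (\<Delta> * \<Delta>)"
  by (rule central_if_commutes_generators)
    (simp_all add: mult.assoc Delta_sigma1 Delta_sigma2 Delta_sigma1_mult Delta_sigma2_mult)

lemma delta_cube: "\<delta> ^ 3 = \<Delta> * \<Delta>"
proof -
  have "\<delta> ^ 3 = \<sigma>\<^sub>2 * \<Delta> * \<sigma>\<^sub>2 * \<sigma>\<^sub>1"
    by (simp add: \<delta>_def \<Delta>_def numeral_3_eq_3 mult.assoc)
  also have "\<dots> = \<sigma>\<^sub>2 * \<sigma>\<^sub>1 * (\<Delta> * \<sigma>\<^sub>1)"
    by (simp add: mult.assoc Delta_sigma2_mult)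
  also have "\<dots> = \<sigma>\<^sub>2 * \<sigma>\<^sub>1 * \<sigma>\<^sub>2 * \<Delta>"
    by (simp add: Delta_sigma1 mult.assoc)
  also have "\<dots> = \<Delta> * \<Delta>"
    by (simp only: \<Delta>_def braid_relation)
  finally show ?thesis .
qed

lemma central_ipow_delta_cube: "central (ipow (\<delta> ^ 3) k)"
  by (simp add: delta_cube central_ipow central_Delta_sq)

lemma mod3_Suc_cases:
  fixes i :: nat
  obtains "i mod 3 = 0" "Suc i mod 3 = 1" | "i mod 3 = 1" "Suc i mod 3 = 2"
    | "i mod 3 = 2" "Suc i mod 3 = 0"
  by (cases "i mod 3 = 0"; cases "i mod 3 = 1") (auto simp: mod_Suc)

lemma br_tau_1: "i mod 3 = 1 \<Longrightarrow> br (tau i) = \<sigma>\<^sub>1"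
  by (simp add: tau_def \<sigma>\<^sub>1_def)

lemma br_tau_2: "i mod 3 = 2 \<Longrightarrow> br (tau i) = \<sigma>\<^sub>2"
  by (simp add: tau_def \<sigma>\<^sub>2_def)

lemma br_tau_0: "i mod 3 = 0 \<Longrightarrow> br (tau i) = ginv \<sigma>\<^sub>1 * \<sigma>\<^sub>2 * \<sigma>\<^sub>1"
  by (simp add: tau_def br_wx)

lemma tau_mod3: "tau (i mod 3) = tau i"
  by (simp add: tau_def)

lemma tau_mult_delta: "br (tau i) * \<delta> = \<delta> * br (tau (Suc i))"
  by (cases i rule: mod3_Suc_cases)
    (simp_all add: br_tau_0 br_tau_1 br_tau_2 \<delta>_def mult.assoc flip: braid_relation_mult braid_relation_assoc)

lemma tau_Suc_mult_tau: "br (tau (Suc i)) * br (tau i) = \<delta>"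
  by (cases i rule: mod3_Suc_cases)
    (simp_all add: br_tau_0 br_tau_1 br_tau_2 \<delta>_def mult.assoc flip: braid_relation_mult braid_relation_assoc)

lemma sigma_mult_Delta: "br (sigma i) * \<Delta> = \<Delta> * br (sigma (Suc i))"
  by (simp add: sigma_def Delta_sigma1 Delta_sigma2 flip: \<sigma>\<^sub>1_def \<sigma>\<^sub>2_def)

lemma tau_Suc_conjugate: "br (tau (Suc i)) = ginv \<delta> * br (tau i) * \<delta>"
  by (simp add: tau_mult_delta mult.assoc)

lemma sigma_Suc_conjugate: "br (sigma (Suc i)) = ginv \<Delta> * br (sigma i) * \<Delta>"
  by (simp add: sigma_mult_Delta mult.assoc)

definition tau_prod :: "nat \<Rightarrow> nat list \<Rightarrow> braid" where
  "tau_prod j us = br (concat (map (\<lambda>(i, u). npow (tau i) u) (enumerate j us)))"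

definition sigma_prod :: "nat \<Rightarrow> nat list \<Rightarrow> braid" where
  "sigma_prod j ps = br (concat (map (\<lambda>(i, p). npow (sigma i) p) (enumerate j ps)))"

lemma tau_prod_Nil [simp]: "tau_prod j [] = 1"
  by (simp add: tau_prod_def br_Nil)

lemma tau_prod_Cons: "tau_prod j (u # us) = br (tau j) ^ u * tau_prod (Suc j) us"
  by (simp add: tau_prod_def br_append br_npow)

lemma sigma_prod_Nil [simp]: "sigma_prod j [] = 1"
  by (simp add: sigma_prod_def br_Nil)

lemma sigma_prod_Cons: "sigma_prod j (p # ps) = br (sigma j) ^ p * sigma_prod (Suc j) ps"
  by (simp add: sigma_prod_def br_append br_npow)

lemma br_xu_word: "br (xu_word n us) = ipow \<delta> n * tau_prod 1 us"
  by (simp add: xu_word_def tau_prod_def br_append br_zpow br_wdelta)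

lemma br_garside_word: "br (garside_word l ps) = ipow \<Delta> l * sigma_prod 1 ps"
  by (simp add: garside_word_def sigma_prod_def br_append br_zpow br_wDelta)

lemma tau_prod_snoc: "tau_prod j (us @ [v]) = tau_prod j us * br (tau (j + length us)) ^ v"
  by (induction us arbitrary: j) (simp_all add: tau_prod_Cons mult.assoc)

lemma tau_prod_Suc: "tau_prod (Suc j) us = ginv \<delta> * tau_prod j us * \<delta>"
proof (induction us arbitrary: j)
  case (Cons u us)
  have "br (tau (Suc j)) ^ u = ginv \<delta> * br (tau j) ^ u * \<delta>"
    by (simp only: tau_Suc_conjugate power_conjugate)
  with Cons show ?case by (simp add: tau_prod_Cons mult.assoc)
qed simp

lemma sigma_prod_Suc: "sigma_prod (Suc j) ps = ginv \<Delta> * sigma_prod j ps * \<Delta>"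
proof (induction ps arbitrary: j)
  case (Cons p ps)
  have "br (sigma (Suc j)) ^ p = ginv \<Delta> * br (sigma j) ^ p * \<Delta>"
    by (simp only: sigma_Suc_conjugate power_conjugate)
  with Cons show ?case by (simp add: sigma_prod_Cons mult.assoc)
qed simp

lemma tau_prod_mult_delta_power: "tau_prod j us * \<delta> ^ k = \<delta> ^ k * tau_prod (j + k) us"
proof (induction k arbitrary: j)
  case (Suc k)
  have "tau_prod j us * \<delta> ^ Suc k = \<delta> * (tau_prod (Suc j) us * \<delta> ^ k)"
    by (simp add: tau_prod_Suc mult.assoc)
  with Suc show ?case by (simp add: mult.assoc)
qed simp

lemma tau_prod_mult_ipow_delta:
  "tau_prod j us * ipow \<delta> n = ipow \<delta> n * tau_prod (j + nat (n mod 3)) us"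
proof -
  have "ipow \<delta> n = ipow (\<delta> ^ 3) (n div 3) * \<delta> ^ nat (n mod 3)"
    using ipow_div_mod[of 3 \<delta> n] by simp
  with central_ipow_delta_cube[of "n div 3"] show ?thesis
    unfolding central_def by (metis tau_prod_mult_delta_power mult.assoc)
qed

lemma conjugate_tau_prod_Suc: "conjugate (ipow \<delta> m * tau_prod j us) (ipow \<delta> m * tau_prod (Suc j) us)"
proof (rule conjugateI[of "ginv \<delta>"])
  have "ginv \<delta> * ipow \<delta> m = ipow \<delta> m * ginv \<delta>"
    using ipow_commute[of \<delta> "-1" m] by (simp add: ipow_def)
  then show "ginv \<delta> * (ipow \<delta> m * tau_prod j us) * ginv (ginv \<delta>) = ipow \<delta> m * tau_prod (Suc j) us"
    by (simp add: tau_prod_Suc) (metis mult.assoc)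
qed

lemma conjugate_tau_prod_index:
  "conjugate (ipow \<delta> m * tau_prod j us) (ipow \<delta> m * tau_prod j' us)"
proof -
  have "conjugate (ipow \<delta> m * tau_prod 0 us) (ipow \<delta> m * tau_prod i us)" for i
    by (induction i) (auto intro: conjugate_refl conjugate_trans conjugate_tau_prod_Suc)
  then show ?thesis by (meson conjugate_sym conjugate_trans)
qed

section \<open>Collecting factors \<open>\<delta>\<close> in letter sequences\<close>

definition tau_seq :: "nat list \<Rightarrow> braid" where
  "tau_seq cs = br (concat (map tau cs))"

lemma tau_seq_Nil [simp]: "tau_seq [] = 1"
  by (simp add: tau_seq_def br_Nil)

lemma tau_seq_Cons: "tau_seq (c # cs) = br (tau c) * tau_seq cs"
  by (simp add: tau_seq_def br_append)

lemma tau_seq_append: "tau_seq (xs @ ys) = tau_seq xs * tau_seq ys"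
  by (simp add: tau_seq_def br_append)

lemma tau_seq_replicate: "tau_seq (replicate u c) = br (tau c) ^ u"
  by (induction u) (simp_all add: tau_seq_Cons)

definition tau_indices :: "nat \<Rightarrow> nat list \<Rightarrow> nat list" where
  "tau_indices j us = concat (map (\<lambda>(i, u). replicate u i) (enumerate j us))"

lemma tau_prod_eq_tau_seq: "tau_prod j us = tau_seq (tau_indices j us)"
  by (induction us arbitrary: j)
    (simp_all add: tau_prod_Cons tau_indices_def tau_seq_append tau_seq_replicate)

lemma tau_seq_mult_delta: "tau_seq p * \<delta> = \<delta> * tau_seq (map Suc p)"
proof (induction p)
  case (Cons c p)
  have "tau_seq (c # p) * \<delta> = br (tau c) * \<delta> * tau_seq (map Suc p)"
    using Cons by (simp add: tau_seq_Cons mult.assoc)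
  then show ?case by (simp add: tau_seq_Cons tau_mult_delta mult.assoc)
qed simp

text \<open>A letter sequence is \<open>delta_free\<close> if no two adjacent letters \<open>\<tau>\<^sub>c \<tau>\<^sub>d\<close> satisfy
  \<open>c = d + 1 (mod 3)\<close>, i.e. multiply to \<open>\<delta>\<close>.\<close>

fun delta_free :: "nat list \<Rightarrow> bool" where
  "delta_free (c # c' # r) \<longleftrightarrow> (c' mod 3 = c mod 3 \<or> c' mod 3 = Suc c mod 3) \<and> delta_free (c' # r)"
| "delta_free _ \<longleftrightarrow> True"

lemma not_delta_free_split:
  "\<not> delta_free cs \<Longrightarrow> \<exists>p c c' s. cs = p @ [c, c'] @ s \<and> Suc c' mod 3 = c mod 3"
proof (induction cs rule: delta_free.induct)
  case (1 c c' r)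
  show ?case
  proof (cases "c' mod 3 = c mod 3 \<or> c' mod 3 = Suc c mod 3")
    case True
    with "1.prems" have "\<not> delta_free (c' # r)" by simp
    with "1.IH" True obtain p d d' s where "c' # r = p @ [d, d'] @ s" "Suc d' mod 3 = d mod 3"
      by blast
    then have "c # c' # r = (c # p) @ [d, d'] @ s \<and> Suc d' mod 3 = d mod 3" by simp
    then show ?thesis by blast
  next
    case False
    then have "Suc c' mod 3 = c mod 3"
      by (cases c rule: mod3_Suc_cases; cases c' rule: mod3_Suc_cases) simp_all
    then have "c # c' # r = [] @ [c, c'] @ r \<and> Suc c' mod 3 = c mod 3" by simp
    then show ?thesis by blast
  qed
qed simp_all

lemma tau_seq_delta_pair:
  assumes "Suc c' mod 3 = c mod 3"
  shows "tau_seq (p @ [c, c'] @ s) = \<delta> * tau_seq (map Suc p @ s)"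
proof -
  have "br (tau c) = br (tau (Suc c'))"
    using assms by (metis tau_mod3)
  then have "br (tau c) * (br (tau c') * z) = \<delta> * z" for z
    using tau_Suc_mult_tau[of c'] by (simp flip: mult.assoc)
  then have "tau_seq (p @ [c, c'] @ s) = tau_seq p * \<delta> * tau_seq s"
    by (simp add: tau_seq_append tau_seq_Cons mult.assoc)
  then show ?thesis by (simp add: tau_seq_mult_delta tau_seq_append mult.assoc)
qed

lemma tau_seq_delta_power_delta_free: "\<exists>k cs'. tau_seq cs = \<delta> ^ k * tau_seq cs' \<and> delta_free cs'"
proof (induction "length cs" arbitrary: cs rule: less_induct)
  case less
  show ?case
  proof (cases "delta_free cs")
    case True
    then show ?thesis by (intro exI[of _ 0] exI[of _ cs]) simp
  next
    case False
    then obtain p c c' s where cs: "cs = p @ [c, c'] @ s" and pair: "Suc c' mod 3 = c mod 3"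
      using not_delta_free_split by blast
    then have "length (map Suc p @ s) < length cs" by simp
    with less obtain k cs' where "tau_seq (map Suc p @ s) = \<delta> ^ k * tau_seq cs'" "delta_free cs'"
      by blast
    with tau_seq_delta_pair[OF pair, of p s] cs have "tau_seq cs = \<delta> ^ Suc k * tau_seq cs'"
      by (simp add: mult.assoc)
    with \<open>delta_free cs'\<close> show ?thesis by blast
  qed
qed

lemma delta_free_tau_prod:
  "delta_free cs \<Longrightarrow> cs \<noteq> [] \<Longrightarrow> hd cs mod 3 = j mod 3 \<Longrightarrow>
   \<exists>us. us \<noteq> [] \<and> (\<forall>u\<in>set us. 1 \<le> u) \<and> tau_seq cs = tau_prod j us"
proof (induction cs arbitrary: j rule: delta_free.induct)
  case (1 c c' r)
  have free: "delta_free (c' # r)" and step: "c' mod 3 = c mod 3 \<or> c' mod 3 = Suc c mod 3"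
    using "1.prems"(1) by auto
  have tau_c: "br (tau c) = br (tau j)"
    using "1.prems"(3) by (metis tau_mod3 list.sel(1))
  show ?case
  proof (cases "c' mod 3 = c mod 3")
    case True
    with "1.IH"[OF free] "1.prems"(3) obtain us' where
      us': "us' \<noteq> []" "\<forall>u\<in>set us'. 1 \<le> u" "tau_seq (c' # r) = tau_prod j us'"
      by auto
    then obtain u us where "us' = u # us" by (cases us') auto
    with us' have us: "\<forall>u\<in>set (u # us). 1 \<le> u" "tau_seq (c' # r) = tau_prod j (u # us)"
      by simp_all
    show ?thesis
      by (rule exI[of _ "Suc u # us"]) (use us tau_c in \<open>simp add: tau_seq_Cons tau_prod_Cons mult.assoc\<close>)
  next
    case False
    have "Suc c mod 3 = Suc j mod 3"
      using "1.prems"(3) by (metis list.sel(1) mod_Suc_eq)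
    with step False have "c' mod 3 = Suc j mod 3" by simp
    with "1.IH"[OF free, of "Suc j"] obtain us where
      us: "\<forall>u\<in>set us. 1 \<le> u" "tau_seq (c' # r) = tau_prod (Suc j) us"
      by auto
    show ?thesis
      by (rule exI[of _ "1 # us"]) (use us tau_c in \<open>simp add: tau_seq_Cons tau_prod_Cons\<close>)
  qed
next
  case ("2_2" c)
  then have "br (tau c) = br (tau j)" by (metis tau_mod3 list.sel(1))
  then show ?case by (intro exI[of _ "[1]"]) (simp add: tau_seq_Cons tau_prod_Cons)
qed simp

lemma conjugate_xu_word_of_tau_seq:
  "\<exists>m' us. m \<le> m' \<and> (\<forall>u\<in>set us. 1 \<le> u) \<and> conjugate (ipow \<delta> m * tau_seq cs) (br (xu_word m' us))"
proof -
  obtain k cs' where k: "tau_seq cs = \<delta> ^ k * tau_seq cs'" "delta_free cs'"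
    using tau_seq_delta_power_delta_free by blast
  have eq: "ipow \<delta> m * tau_seq cs = ipow \<delta> (m + int k) * tau_seq cs'"
    by (simp add: k ipow_add mult.assoc)
  show ?thesis
  proof (cases "cs' = []")
    case True
    with eq show ?thesis
      by (intro exI[of _ "m + int k"] exI[of _ "[]"]) (simp add: br_xu_word conjugate_refl)
  next
    case False
    with k(2) obtain us where us: "\<forall>u\<in>set us. 1 \<le> u" "tau_seq cs' = tau_prod (hd cs') us"
      using delta_free_tau_prod by blast
    with eq have "conjugate (ipow \<delta> m * tau_seq cs) (ipow \<delta> (m + int k) * tau_prod 1 us)"
      using conjugate_tau_prod_index by simp
    with us(1) show ?thesis
      by (intro exI[of _ "m + int k"] exI[of _ us]) (simp add: br_xu_word)
  qed
qed

section \<open>Consequences of Xu-minimality\<close>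

lemma xu_nf_pos: "xu_nf n us \<Longrightarrow> \<forall>u\<in>set us. 1 \<le> u"
  by (simp add: xu_nf_def)

lemma xu_nf_minimal:
  assumes "xu_nf n us" "\<forall>u\<in>set us'. 1 \<le> u" "conjugate (br (xu_word n us)) (br (xu_word n' us'))"
  shows "(- n, length us, us) \<le> (- n', length us', us')"
  using assms unfolding xu_nf_def braid_conj_iff by blast

lemma wrap_index_mod3: "int ((2 + nat (n mod 3) + k) mod 3) = (n + int k + 2) mod 3"
proof -
  have "int ((2 + nat (n mod 3) + k) mod 3) = (2 + n mod 3 + int k) mod 3"
    by (simp add: zmod_int add.assoc)
  also have "\<dots> = (n + int k + 2) mod 3"
    by (metis add.commute add.left_commute mod_add_left_eq)
  finally show ?thesis .
qed

text \<open>Conjugating the first block \<open>\<sigma>\<^sub>1\<^sup>u\<close> to the end moves it past \<open>\<delta>\<^sup>n\<close>,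
  which shifts the remaining indices by \<open>n mod 3\<close>.\<close>

lemma conjugate_move_first_block:
  "conjugate (ipow \<delta> n * tau_prod 1 (u # us))
     (ipow \<delta> n * (tau_prod (2 + nat (n mod 3)) us * \<sigma>\<^sub>1 ^ u))"
proof -
  have "tau_prod 1 (u # us) = \<sigma>\<^sub>1 ^ u * tau_prod 2 us"
    by (simp add: tau_prod_Cons br_tau_1 numeral_2_eq_2)
  then have "conjugate (ipow \<delta> n * tau_prod 1 (u # us)) (tau_prod 2 us * (ipow \<delta> n * \<sigma>\<^sub>1 ^ u))"
    using conjugate_mult_swap[of "ipow \<delta> n * \<sigma>\<^sub>1 ^ u" "tau_prod 2 us"] by (simp add: mult.assoc)
  then show ?thesis
    by (simp add: tau_prod_mult_ipow_delta flip: mult.assoc)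
qed

lemma conjugate_xu_word_rotate1:
  assumes "us \<noteq> []" "(n + int (length us)) mod 3 = 0"
  shows "conjugate (br (xu_word n us)) (br (xu_word n (rotate1 us)))"
proof -
  obtain u rest where us: "us = u # rest" using assms(1) by (cases us) auto
  let ?j = "2 + nat (n mod 3)"
  have "(n + int (length rest) + 2) mod 3 = 1"
    using assms(2) us by simp presburger
  then have "(?j + length rest) mod 3 = 1"
    using wrap_index_mod3[of n "length rest"] by simp
  then have "tau_prod ?j rest * \<sigma>\<^sub>1 ^ u = tau_prod ?j (rest @ [u])"
    by (simp add: tau_prod_snoc br_tau_1)
  then have "conjugate (br (xu_word n us)) (ipow \<delta> n * tau_prod ?j (rest @ [u]))"
    using conjugate_move_first_block[of n u rest] us by (simp add: br_xu_word)
  then show ?thesis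
    using conjugate_tau_prod_index[of n ?j "rest @ [u]" 1] us
    by (simp add: br_xu_word) (rule conjugate_trans)
qed

lemma conjugate_xu_word_rotate:
  assumes "us \<noteq> []" "(n + int (length us)) mod 3 = 0"
  shows "conjugate (br (xu_word n us)) (br (xu_word n (rotate i us)))"
proof (induction i)
  case (Suc i)
  have "conjugate (br (xu_word n (rotate i us))) (br (xu_word n (rotate1 (rotate i us))))"
    using assms by (intro conjugate_xu_word_rotate1) auto
  with Suc show ?case by (simp add: rotate_Suc) (rule conjugate_trans)
qed (simp add: conjugate_refl)

lemma conjugate_xu_word_wrap:
  "conjugate (br (xu_word n (u # us @ [v])))
     (ipow \<delta> n * (tau_prod (2 + nat (n mod 3)) us * br (tau (2 + nat (n mod 3) + length us)) ^ v * \<sigma>\<^sub>1 ^ u))"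
  using conjugate_move_first_block[of n u "us @ [v]"] by (simp add: br_xu_word tau_prod_snoc)

text \<open>If the first and the last block were both powers of \<open>\<sigma>\<^sub>1\<close> after the wrap-around,
  they would merge into a shorter conjugate word.\<close>

lemma xu_nf_not_mergeable:
  assumes nf: "xu_nf n (u # us @ [v])"
  shows "(n + int (length us) + 2) mod 3 \<noteq> 1"
proof
  assume "(n + int (length us) + 2) mod 3 = 1"
  let ?j = "2 + nat (n mod 3)"
  have "(?j + length us) mod 3 = 1"
    using wrap_index_mod3[of n "length us"] \<open>(n + int (length us) + 2) mod 3 = 1\<close> by simp
  then have "tau_prod ?j us * br (tau (?j + length us)) ^ v * \<sigma>\<^sub>1 ^ u = tau_prod ?j (us @ [v + u])"
    by (simp add: tau_prod_snoc br_tau_1 power_add mult.assoc)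
  then have "conjugate (br (xu_word n (u # us @ [v]))) (br (xu_word n (us @ [v + u])))"
    using conjugate_xu_word_wrap[of n u us v] conjugate_tau_prod_index[of n ?j "us @ [v + u]" 1]
    by (metis conjugate_trans br_xu_word)
  moreover have "\<forall>w\<in>set (us @ [v + u]). 1 \<le> w"
    using xu_nf_pos[OF nf] by auto
  ultimately have "(- n, length (u # us @ [v]), u # us @ [v]) \<le> (- n, length (us @ [v + u]), us @ [v + u])"
    by (intro xu_nf_minimal[OF nf])
  then show False by simp
qed

text \<open>If the last block were a power of \<open>\<sigma>\<^sub>2\<close> after the wrap-around, its last letter
  would combine with the first \<open>\<sigma>\<^sub>1\<close> into \<open>\<delta>\<close>, raising the exponent of \<open>\<delta>\<close>.\<close>

lemma xu_nf_no_delta_at_wrap: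
  assumes nf: "xu_nf n (u # us @ [v])"
  shows "(n + int (length us) + 2) mod 3 \<noteq> 2"
proof
  assume "(n + int (length us) + 2) mod 3 = 2"
  let ?j = "2 + nat (n mod 3)"
  let ?c = "?j + length us"
  have c: "?c mod 3 = 2"
    using wrap_index_mod3[of n "length us"] \<open>(n + int (length us) + 2) mod 3 = 2\<close> by simp
  have "1 \<le> u" "1 \<le> v"
    using xu_nf_pos[OF nf] by simp_all
  then obtain u' v' where uv: "u = Suc u'" "v = Suc v'"
    by (metis Suc_le_D One_nat_def)
  define p where "p = tau_indices ?j us @ replicate v' ?c"
  have "br (tau ?c) ^ v = br (tau ?c) ^ v' * br (tau ?c)"
    by (simp only: uv power_Suc2)
  then have "tau_prod ?j us * br (tau ?c) ^ v * \<sigma>\<^sub>1 ^ u = tau_seq (p @ [?c, 1] @ replicate u' 1)"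
    by (simp add: p_def uv(1) tau_prod_eq_tau_seq tau_seq_append tau_seq_Cons tau_seq_replicate
        br_tau_1 mult.assoc)
  also have "\<dots> = \<delta> * tau_seq (map Suc p @ replicate u' 1)"
    using c by (intro tau_seq_delta_pair) simp
  finally have "ipow \<delta> n * (tau_prod ?j us * br (tau ?c) ^ v * \<sigma>\<^sub>1 ^ u)
      = ipow \<delta> (n + 1) * tau_seq (map Suc p @ replicate u' 1)"
    by (simp add: ipow_succ mult.assoc)
  moreover obtain m' us' where "n + 1 \<le> m'" "\<forall>w\<in>set us'. 1 \<le> w"
    "conjugate (ipow \<delta> (n + 1) * tau_seq (map Suc p @ replicate u' 1)) (br (xu_word m' us'))"
    using conjugate_xu_word_of_tau_seq by blast
  ultimately have "conjugate (br (xu_word n (u # us @ [v]))) (br (xu_word m' us'))"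
    using conjugate_xu_word_wrap[of n u us v] by (metis conjugate_trans)
  with \<open>\<forall>w\<in>set us'. 1 \<le> w\<close> have "(- n, length (u # us @ [v]), u # us @ [v]) \<le> (- m', length us', us')"
    by (rule xu_nf_minimal[OF nf])
  with \<open>n + 1 \<le> m'\<close> show False by simp
qed

lemma xu_nf_length_mod3:
  assumes nf: "xu_nf n us" and len: "2 \<le> length us"
  shows "(n + int (length us)) mod 3 = 0"
proof -
  obtain u rest where us0: "us = u # rest"
    using len by (cases us) auto
  with len have "rest \<noteq> []" by auto
  then obtain vs v where us: "us = u # vs @ [v]"
    using us0 by (metis rev_exhaust)
  show ?thesis
    using xu_nf_not_mergeable[of n u vs v] xu_nf_no_delta_at_wrap[of n u vs v] nf
    unfolding us by simp presburger
qed

lemma xu_nf_le_rotate: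
  assumes nf: "xu_nf n us" and len: "2 \<le> length us"
  shows "us \<le> rotate i us"
proof -
  have "conjugate (br (xu_word n us)) (br (xu_word n (rotate i us)))"
    using len xu_nf_length_mod3[OF nf len] by (intro conjugate_xu_word_rotate) auto
  moreover have "\<forall>u\<in>set (rotate i us). 1 \<le> u"
    using xu_nf_pos[OF nf] by simp
  ultimately have "(- n, length us, us) \<le> (- n, length (rotate i us), rotate i us)"
    using xu_nf_minimal[OF nf] by blast
  then show ?thesis by simp
qed

section \<open>Garside representatives\<close>

fun sigma1_runs :: "nat list \<Rightarrow> braid" where
  "sigma1_runs [] = 1"
| "sigma1_runs [u] = \<sigma>\<^sub>1 ^ u"
| "sigma1_runs (u # v # us) = \<sigma>\<^sub>1 ^ u * ginv \<delta> * sigma1_runs (v # us)"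

lemma br_sigma_odd: "odd i \<Longrightarrow> br (sigma i) = \<sigma>\<^sub>1"
  by (simp add: sigma_def \<sigma>\<^sub>1_def)

lemma br_sigma_even: "even i \<Longrightarrow> br (sigma i) = \<sigma>\<^sub>2"
  by (simp add: sigma_def \<sigma>\<^sub>2_def)

lemma ginv_Delta_mult_sigma1: "ginv \<Delta> * \<sigma>\<^sub>1 = ginv \<delta>"
  by (simp add: Delta_eq mult.inverse_distrib_swap mult.assoc)

lemma tau_prod_eq_sigma1_runs:
  "us \<noteq> [] \<Longrightarrow> tau_prod 1 us = sigma1_runs us * \<delta> ^ (length us - 1)"
proof (induction us rule: sigma1_runs.induct)
  case (2 u)
  then show ?case by (simp add: tau_prod_Cons br_tau_1)
next
  case (3 u v us)
  have "tau_prod 1 (u # v # us) = \<sigma>\<^sub>1 ^ u * (ginv \<delta> * tau_prod 1 (v # us) * \<delta>)"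
    using tau_prod_Cons[of 1 u "v # us"] tau_prod_Suc[of 1 "v # us"] by (simp add: br_tau_1)
  with 3 show ?case by (simp add: mult.assoc power_commutes)
qed simp

lemma sigma_prod_eq_sigma1_runs:
  "us \<noteq> [] \<Longrightarrow> sigma_prod 1 (map Suc us) = \<sigma>\<^sub>1 * sigma1_runs us * \<Delta> ^ (length us - 1)"
proof (induction us rule: sigma1_runs.induct)
  case (2 u)
  then show ?case by (simp add: sigma_prod_Cons br_sigma_odd)
next
  case (3 u v us)
  have "sigma_prod 1 (map Suc (u # v # us))
      = \<sigma>\<^sub>1 ^ Suc u * (ginv \<Delta> * sigma_prod 1 (map Suc (v # us)) * \<Delta>)"
    using sigma_prod_Cons[of 1 "Suc u" "map Suc (v # us)"] sigma_prod_Suc[of 1 "map Suc (v # us)"]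
    by (simp add: br_sigma_odd)
  also have "\<dots> = \<sigma>\<^sub>1 * \<sigma>\<^sub>1 ^ u * (ginv \<Delta> * \<sigma>\<^sub>1) * sigma1_runs (v # us) * \<Delta> ^ length us * \<Delta>"
    using 3 by (simp add: mult.assoc)
  finally show ?case
    by (simp add: ginv_Delta_mult_sigma1 mult.assoc power_commutes)
qed simp

text \<open>Cyclically moving the trailing powers of \<open>\<delta>\<close> and \<open>\<Delta>\<close> to the front, both sides become
  a power of \<open>\<delta>\<close> times \<open>sigma1_runs us\<close>; the exponents agree because
  \<open>\<Delta>\<^sup>2\<^sup>j\<^sup>+\<^sup>1 \<sigma>\<^sub>1 = \<delta>\<^sup>3\<^sup>j\<^sup>+\<^sup>2\<close>.\<close>

lemma conjugate_xu_garside_word: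
  assumes ne: "us \<noteq> []" and l: "3 * l = 2 * n - int (length us)"
  shows "conjugate (br (xu_word n us)) (br (garside_word l (map Suc us)))"
proof -
  define s where "s = length us - 1"
  have len: "int (length us) = int s + 1"
    using ne s_def by (cases us) auto
  have xu: "conjugate (br (xu_word n us)) (ipow \<delta> (n + int s) * sigma1_runs us)"
  proof -
    have "conjugate ((ipow \<delta> n * sigma1_runs us) * \<delta> ^ s) (\<delta> ^ s * (ipow \<delta> n * sigma1_runs us))"
      by (rule conjugate_mult_swap)
    moreover have "\<delta> ^ s * (ipow \<delta> n * sigma1_runs us) = ipow \<delta> (n + int s) * sigma1_runs us"
      by (metis ipow_add ipow_commute ipow_of_nat mult.assoc)
    ultimately show ?thesis
      using tau_prod_eq_sigma1_runs[OF ne] s_def by (simp add: br_xu_word mult.assoc)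
  qed
  have gar: "conjugate (br (garside_word l (map Suc us))) (ipow \<Delta> (l + int s) * (\<sigma>\<^sub>1 * sigma1_runs us))"
  proof -
    have "conjugate ((ipow \<Delta> l * (\<sigma>\<^sub>1 * sigma1_runs us)) * \<Delta> ^ s)
        (\<Delta> ^ s * (ipow \<Delta> l * (\<sigma>\<^sub>1 * sigma1_runs us)))"
      by (rule conjugate_mult_swap)
    moreover have "\<Delta> ^ s * (ipow \<Delta> l * (\<sigma>\<^sub>1 * sigma1_runs us)) = ipow \<Delta> (l + int s) * (\<sigma>\<^sub>1 * sigma1_runs us)"
      by (metis ipow_add ipow_commute ipow_of_nat mult.assoc)
    ultimately show ?thesis
      using sigma_prod_eq_sigma1_runs[OF ne] s_def by (simp add: br_garside_word mult.assoc)
  qed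
  have "odd (l + int s)" using l len by presburger
  then obtain j where j: "l + int s = 2 * j + 1" by (metis oddE)
  have j': "n + int s = 3 * j + 2" using j l len by linarith
  have "ipow \<Delta> (l + int s) * (\<sigma>\<^sub>1 * sigma1_runs us) = ipow (\<Delta> ^ 2) j * (\<Delta> * \<sigma>\<^sub>1) * sigma1_runs us"
    by (simp only: j ipow_add ipow_mult[of \<Delta> 2, simplified] ipow_1 mult.assoc)
  also have "\<dots> = ipow (\<delta> ^ 3) j * \<delta> ^ 2 * sigma1_runs us"
    by (simp add: Delta_sigma1_eq_delta_sq delta_cube power2_eq_square)
  also have "\<dots> = ipow \<delta> (n + int s) * sigma1_runs us"
    by (simp only: j' ipow_add ipow_mult[of \<delta> 3, simplified] ipow_of_nat[of \<delta> 2, simplified])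
  finally show ?thesis
    using xu gar by (metis conjugate_sym conjugate_trans)
qed

lemma map_Suc_le: "(xs :: nat list) \<le> ys \<Longrightarrow> map Suc xs \<le> map Suc ys"
proof (induction xs arbitrary: ys)
  case (Cons x xs)
  then show ?case by (cases ys) auto
qed simp

lemma xu_nf_garside_rep:
  assumes nf: "xu_nf n us" and len: "2 \<le> length us"
  defines "l \<equiv> (2 * n - int (length us)) div 3"
  shows "3 dvd (2 * n - int (length us)) \<and> is_garside_rep (xu_word n us) l (map Suc us)"
proof
  have mod3: "(n + int (length us)) mod 3 = 0"
    by (rule xu_nf_length_mod3[OF nf len])
  then show dvd: "3 dvd (2 * n - int (length us))" by presburger
  then have l3: "3 * l = 2 * n - int (length us)" by (simp add: l_def)
  have "garside_nf l (map Suc us)"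
    unfolding garside_nf_def
  proof (intro disjI2 conjI ballI allI impI)
    show "l mod 2 = int (length (map Suc us)) mod 2"
      using l3 by simp presburger
    show "2 \<le> p" if "p \<in> set (map Suc us)" for p
      using that xu_nf_pos[OF nf] by auto
    show "map Suc us \<le> rotate i (map Suc us)" for i
      using xu_nf_le_rotate[OF nf len, of i] by (simp add: rotate_map map_Suc_le)
  qed (use len in auto)
  moreover have "conjugate (br (xu_word n us)) (br (garside_word l (map Suc us)))"
    using len by (intro conjugate_xu_garside_word l3) auto
  ultimately show "is_garside_rep (xu_word n us) l (map Suc us)"
    by (simp add: is_garside_rep_def braid_conj_iff)
qed

text \<open>Since \<open>\<delta>\<^sup>3 = \<Delta>\<^sup>2\<close> is central, the short cases reduce to a conjugacy between
  \<open>\<delta>\<^sup>r \<tau>\<^sub>1\<^sup>u\<^sup>1\<dots>\<close> with \<open>r < 3\<close> and \<open>\<Delta>\<^sup>e \<sigma>\<^sub>1\<^sup>p\<^sup>1\<dots>\<close> with \<open>e < 2\<close>.\<close>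

lemma is_garside_rep_central_reduction:
  assumes "n = 3 * k + int r" "l = 2 * k + int e" "garside_nf l ps"
    and "conjugate (\<delta> ^ r * tau_prod 1 us) (\<Delta> ^ e * sigma_prod 1 ps)"
  shows "is_garside_rep (xu_word n us) l ps"
proof -
  have "br (xu_word n us) = ipow (\<Delta> * \<Delta>) k * (\<delta> ^ r * tau_prod 1 us)"
    using ipow_mult[of \<delta> 3 k] by (simp add: assms(1) br_xu_word ipow_add delta_cube mult.assoc)
  moreover have "br (garside_word l ps) = ipow (\<Delta> * \<Delta>) k * (\<Delta> ^ e * sigma_prod 1 ps)"
    using ipow_mult[of \<Delta> 2 k] by (simp add: assms(2) br_garside_word ipow_add power2_eq_square mult.assoc)
  ultimately show ?thesis
    using assms(3,4) central_ipow[OF central_Delta_sq]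
    by (simp add: is_garside_rep_def braid_conj_iff conjugate_central_mult)
qed

lemma conjugate_delta_sq: "conjugate (\<delta> * \<delta>) (\<sigma>\<^sub>1 ^ 3 * \<sigma>\<^sub>2)"
proof -
  have "\<delta> * \<delta> = (\<sigma>\<^sub>2 * \<sigma>\<^sub>2 * \<sigma>\<^sub>1) * \<sigma>\<^sub>2"
    by (simp add: \<delta>_def mult.assoc braid_relation_assoc)
  then have "conjugate (\<delta> * \<delta>) (\<sigma>\<^sub>2 ^ 3 * \<sigma>\<^sub>1)"
    using conjugate_mult_swap[of "\<sigma>\<^sub>2 * \<sigma>\<^sub>2 * \<sigma>\<^sub>1" \<sigma>\<^sub>2] by (simp add: numeral_3_eq_3 mult.assoc)
  moreover have "ginv \<Delta> * (\<sigma>\<^sub>2 ^ 3 * \<sigma>\<^sub>1) * ginv (ginv \<Delta>) = \<sigma>\<^sub>1 ^ 3 * \<sigma>\<^sub>2"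
  proof -
    have "ginv \<Delta> * \<sigma>\<^sub>2 * \<Delta> = \<sigma>\<^sub>1" "ginv \<Delta> * \<sigma>\<^sub>1 * \<Delta> = \<sigma>\<^sub>2"
      by (simp_all add: mult.assoc flip: Delta_sigma1 Delta_sigma2)
    moreover have "ginv \<Delta> * (\<sigma>\<^sub>2 ^ 3 * \<sigma>\<^sub>1) * ginv (ginv \<Delta>)
        = ginv \<Delta> * \<sigma>\<^sub>2 ^ 3 * \<Delta> * (ginv \<Delta> * \<sigma>\<^sub>1 * \<Delta>)"
      by (simp add: mult.assoc)
    ultimately show ?thesis
      by (simp only: flip: power_conjugate)
  qed
  ultimately show ?thesis
    by (blast intro: conjugate_trans conjugateI)
qed

lemma tau_prod_single: "tau_prod j [u] = br (tau j) ^ u"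
  by (simp add: tau_prod_Cons)

lemma sigma_prod_single: "sigma_prod j [p] = br (sigma j) ^ p"
  by (simp add: sigma_prod_Cons)

lemma sigma_prod_pair: "sigma_prod j [p, q] = br (sigma j) ^ p * br (sigma (Suc j)) ^ q"
  by (simp add: sigma_prod_Cons)

lemma garside_rep_delta_power_0mod3: "is_garside_rep (xu_word (3 * k) []) (2 * k) []"
  by (rule is_garside_rep_central_reduction[where r = 0 and e = 0])
    (simp_all add: garside_nf_def conjugate_refl)

lemma garside_rep_delta_power_1mod3: "is_garside_rep (xu_word (3 * k + 1) []) (2 * k) [1, 1]"
  by (rule is_garside_rep_central_reduction[where r = 1 and e = 0])
    (simp_all add: garside_nf_def sigma_prod_pair br_sigma_odd br_sigma_even \<delta>_def conjugate_mult_swap)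

lemma garside_rep_delta_power_2mod3: "is_garside_rep (xu_word (3 * k + 2) []) (2 * k) [3, 1]"
  by (rule is_garside_rep_central_reduction[where r = 2 and e = 0])
    (simp_all add: garside_nf_def sigma_prod_pair br_sigma_odd br_sigma_even power2_eq_square conjugate_delta_sq)

lemma garside_rep_sigma1_power_0mod3:
  "1 \<le> u \<Longrightarrow> is_garside_rep (xu_word (3 * k) [u]) (2 * k) [u]"
  by (rule is_garside_rep_central_reduction[where r = 0 and e = 0])
    (simp_all add: garside_nf_def tau_prod_single sigma_prod_single br_tau_1 br_sigma_odd conjugate_refl)

lemma garside_rep_sigma1_1mod3: "is_garside_rep (xu_word (3 * k + 1) [1]) (2 * k) [2, 1]"
proof (rule is_garside_rep_central_reduction[where r = 1 and e = 0])
  have "conjugate (\<sigma>\<^sub>2 * (\<sigma>\<^sub>1 * \<sigma>\<^sub>1)) ((\<sigma>\<^sub>1 * \<sigma>\<^sub>1) * \<sigma>\<^sub>2)"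
    by (rule conjugate_mult_swap)
  then show "conjugate (\<delta> ^ 1 * tau_prod 1 [1]) (\<Delta> ^ 0 * sigma_prod 1 [2, 1])"
    by (simp add: tau_prod_single sigma_prod_pair br_tau_1 br_sigma_odd br_sigma_even \<delta>_def
        numeral_2_eq_2 mult.assoc)
qed (simp_all add: garside_nf_def)

lemma garside_rep_sigma1_power_2mod3:
  "1 \<le> u \<Longrightarrow> is_garside_rep (xu_word (3 * k + 2) [u]) (2 * k + 1) [1 + u]"
proof (rule is_garside_rep_central_reduction[where r = 2 and e = 1])
  have "\<delta> ^ 2 * \<sigma>\<^sub>1 ^ u = \<Delta> * \<sigma>\<^sub>1 ^ (1 + u)"
    by (simp add: Delta_sigma1_eq_delta_sq power2_eq_square flip: mult.assoc)
  then show "conjugate (\<delta> ^ 2 * tau_prod 1 [u]) (\<Delta> ^ 1 * sigma_prod 1 [1 + u])"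
    by (simp add: tau_prod_single sigma_prod_single br_tau_1 br_sigma_odd conjugate_refl)
qed (simp_all add: garside_nf_def)

theorem lemma2p7:
  fixes n :: int and us :: "nat list"
  assumes "xu_nf n us"
  shows "(\<forall>k. us = [] \<and> n = 3 * k \<longrightarrow> is_garside_rep (xu_word n us) (2 * k) [])
       \<and> (\<forall>k. us = [] \<and> n = 3 * k + 1 \<longrightarrow> is_garside_rep (xu_word n us) (2 * k) [1, 1])
       \<and> (\<forall>k. us = [] \<and> n = 3 * k + 2 \<longrightarrow> is_garside_rep (xu_word n us) (2 * k) [3, 1])
       \<and> (\<forall>k u. us = [u] \<and> n = 3 * k \<longrightarrow> is_garside_rep (xu_word n us) (2 * k) [u])
       \<and> (\<forall>k. us = [1] \<and> n = 3 * k + 1 \<longrightarrow> is_garside_rep (xu_word n us) (2 * k) [2, 1])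
       \<and> (\<forall>k u. us = [u] \<and> n = 3 * k + 2 \<longrightarrow> is_garside_rep (xu_word n us) (2 * k + 1) [1 + u])
       \<and> (2 \<le> length us \<longrightarrow>
            3 dvd (2 * n - int (length us)) \<and>
            is_garside_rep (xu_word n us) ((2 * n - int (length us)) div 3) (map (\<lambda>u. 1 + u) us))"
proof -
  have pos: "\<forall>u\<in>set us. 1 \<le> u"
    using xu_nf_pos[OF assms] .
  have "map (\<lambda>u. 1 + u) us = map Suc us" by simp
  then show ?thesis
    using pos xu_nf_garside_rep[OF assms]
      garside_rep_delta_power_0mod3 garside_rep_delta_power_1mod3 garside_rep_delta_power_2mod3
      garside_rep_sigma1_power_0mod3 garside_rep_sigma1_1mod3 garside_rep_sigma1_power_2mod3
    by auto
qed

end
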